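(* For all sufficiently large $K$ we have $\mathrm{Ran}(U)=\mathrm{Ran}(UP_K)$; in particular, the problems $\min_{z\in\mathbb C^K}\|z\|_{1,w}$ subject to $UP_Kz=y$, and $\min_{z\in\mathbb C^K}\|z\|_{1,w}$ subject to $\|UP_Kz-y\|\le\eta$, have solutions for all large $K$. Moreover, suppose $K$ is large enough that $\mathrm{Ran}(UP_K)=\mathrm{Ran}(U)$. If $x\in\ell^1_w(\mathbb N)$, then $$T_{h,K,\eta}(x)\le\|x-P_Kx\|_{1,w}+\frac{\|P_Kw\|}{\sigma_{\min}}\|x-P_Kx\|_{1,w},$$ where $\sigma_{\min}$ is the minimum singular value of $UP_K$. Moreover, if $\{w_i\}_{i\in\mathbb N}$ is nondecreasing and $x\in\ell^1_{\tilde w}(\mathbb N)$, where $\tilde w=\{\tilde w_i\}$ satisfies $\tilde w_i\ge\sqrt i\,w_i^2$ for all $i$, then $$T_{h,K,\eta}(x)\le\|x-P_Kx\|_{1,w}+\frac1{\sigma_{\min}}\|x-P_Kx\|_{1,\tilde w}.$$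
   Context: Setting: $D\subseteq\mathbb R^d$ a domain, $\nu\ge0$ integrable on $D$ with $\int_D\nu=1$, $\{\phi_i\}_{i\in\mathbb N}\subseteq L^2_\nu(D)\cap L^\infty(D)$ orthonormal in $L^2_\nu(D)$. $T=\{t_n\}_{n=1}^N\subseteq\overline D$ with Voronoi cells $V_n=\{t\in D:|t-t_n|\le|t-t_m|\ \forall m\ne n\}$ and quadrature weights $\tau_n=\int_{V_n}\nu$. Positive weights $w_i\ge\|\phi_i\|_{L^\infty}$; $\|z\|_{1,v}=\sum_iv_i|z_i|$ for positive weights $v$, with $\ell^1_v(\mathbb N)$ the associated space. $U$ is the $N\times\infty$ matrix $U_{n,i}=\sqrt{\tau_n}\phi_i(t_n)$. The target is $f=\sum_ix_i\phi_i$; data $y=\{\sqrt{\tau_n}(f(t_n)+e_n)\}_{n=1}^N$, $|e_n|\le\eta$. $P_K$ is the projection onto the first $K$ coordinates; $P_Kw=(w_1,\dots,w_K)$, $\|\cdot\|$ the $\ell^2$ norm. $\sigma_{\min}=\inf_{y'\in\mathbb C^N,\|y'\|=1}\|(UP_K)^*y'\|$. $T_{h,K,\eta}(x)=\inf\{\|x-\bar x\|_{1,w}:\bar x\in\mathbb C^K,\ \|UP_K\bar x-y\|\le\eta\}$. *)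

theory Defs
  imports "HOL-Analysis.Analysis"
begin

text \<open>Conventions: sequences in the paper indexed by i = 1,2,... are represented
  as functions on nat with the paper's index i corresponding to Isabelle index i-1.
  Vectors in C^N (resp. C^K) are functions nat => complex, only the entries
  n < N (resp. i < K) being relevant.\<close>

definition voronoi :: "'a::euclidean_space set \<Rightarrow> (nat \<Rightarrow> 'a) \<Rightarrow> nat \<Rightarrow> nat \<Rightarrow> 'a set" where
  "voronoi D t N n = {s \<in> D. \<forall>m<N. m \<noteq> n \<longrightarrow> dist s (t n) \<le> dist s (t m)}"

definition qweight :: "('a::euclidean_space \<Rightarrow> real) \<Rightarrow> 'a set \<Rightarrow> (nat \<Rightarrow> 'a) \<Rightarrow> nat \<Rightarrow> nat \<Rightarrow> real" where
  "qweight \<nu> D t N n = (LINT s:voronoi D t N n|lborel. \<nu> s)"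

definition norm1w :: "(nat \<Rightarrow> real) \<Rightarrow> (nat \<Rightarrow> complex) \<Rightarrow> real" where
  "norm1w v z = (\<Sum>i. v i * cmod (z i))"

definition in_l1w :: "(nat \<Rightarrow> real) \<Rightarrow> (nat \<Rightarrow> complex) \<Rightarrow> bool" where
  "in_l1w v z \<longleftrightarrow> summable (\<lambda>i. v i * cmod (z i))"

definition projK :: "nat \<Rightarrow> (nat \<Rightarrow> 'b::zero) \<Rightarrow> nat \<Rightarrow> 'b" where
  "projK K z = (\<lambda>i. if i < K then z i else 0)"

definition vnorm :: "nat \<Rightarrow> (nat \<Rightarrow> complex) \<Rightarrow> real" where
  "vnorm N v = sqrt (\<Sum>n<N. (cmod (v n))\<^sup>2)"

definition Umat :: "(nat \<Rightarrow> 'a \<Rightarrow> complex) \<Rightarrow> (nat \<Rightarrow> real) \<Rightarrow> (nat \<Rightarrow> 'a) \<Rightarrow> nat \<Rightarrow> nat \<Rightarrow> complex" where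
  "Umat \<phi> \<tau> t n i = complex_of_real (sqrt (\<tau> n)) * \<phi> i (t n)"

definition Uop :: "(nat \<Rightarrow> 'a \<Rightarrow> complex) \<Rightarrow> (nat \<Rightarrow> real) \<Rightarrow> (nat \<Rightarrow> 'a) \<Rightarrow> nat \<Rightarrow> (nat \<Rightarrow> complex) \<Rightarrow> nat \<Rightarrow> complex" where
  "Uop \<phi> \<tau> t N v = (\<lambda>n. if n < N then (\<Sum>i. Umat \<phi> \<tau> t n i * v i) else 0)"

definition RanU :: "(nat \<Rightarrow> 'a \<Rightarrow> complex) \<Rightarrow> (nat \<Rightarrow> real) \<Rightarrow> (nat \<Rightarrow> 'a) \<Rightarrow> nat \<Rightarrow> (nat \<Rightarrow> real) \<Rightarrow> (nat \<Rightarrow> complex) set" where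
  "RanU \<phi> \<tau> t N w = Uop \<phi> \<tau> t N ` {v. in_l1w w v}"

definition RanUPK :: "(nat \<Rightarrow> 'a \<Rightarrow> complex) \<Rightarrow> (nat \<Rightarrow> real) \<Rightarrow> (nat \<Rightarrow> 'a) \<Rightarrow> nat \<Rightarrow> nat \<Rightarrow> (nat \<Rightarrow> complex) set" where
  "RanUPK \<phi> \<tau> t N K = (\<lambda>z. Uop \<phi> \<tau> t N (projK K z)) ` UNIV"

text \<open>sigma_min = inf over unit y' in C^N of the norm of (U P_K)^* y' in C^K.\<close>
definition sigma_min :: "(nat \<Rightarrow> 'a \<Rightarrow> complex) \<Rightarrow> (nat \<Rightarrow> real) \<Rightarrow> (nat \<Rightarrow> 'a) \<Rightarrow> nat \<Rightarrow> nat \<Rightarrow> real" where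
  "sigma_min \<phi> \<tau> t N K = Inf {sqrt (\<Sum>i<K. (cmod (\<Sum>n<N. cnj (Umat \<phi> \<tau> t n i) * y' n))\<^sup>2) | y'. vnorm N y' = 1}"

text \<open>T_{h,K,eta}(x): infimum of ||x - xbar||_{1,w} over xbar in C^K
  (embedded as sequences vanishing from index K on) with ||U P_K xbar - y|| <= eta.\<close>
definition Thk :: "(nat \<Rightarrow> 'a \<Rightarrow> complex) \<Rightarrow> (nat \<Rightarrow> real) \<Rightarrow> (nat \<Rightarrow> 'a) \<Rightarrow> nat \<Rightarrow> (nat \<Rightarrow> real)
     \<Rightarrow> (nat \<Rightarrow> complex) \<Rightarrow> nat \<Rightarrow> real \<Rightarrow> (nat \<Rightarrow> complex) \<Rightarrow> real" where
  "Thk \<phi> \<tau> t N w y K \<eta> x = Inf {norm1w w (x - xb) | xb.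
      (\<forall>i\<ge>K. xb i = 0) \<and> vnorm N (\<lambda>n. Uop \<phi> \<tau> t N xb n - y n) \<le> \<eta>}"

end

theory Submission
  imports Defs "HOL-Library.Function_Algebras"
begin

text \<open>
  The columns of \<open>U\<close> lie in \<open>\<complex>\<^sup>N\<close>, so finitely many of them span all of them, and
  \<open>Ran(U)\<close> lies in their span because a linear functional vanishing on every column vanishes
  on every \<open>U v\<close>, \<open>v \<in> \<ell>\<^sup>1\<^sub>w\<close>. Hence \<open>Ran(U P\<^sub>K) = Ran(U)\<close> for large \<open>K\<close>; both feasible sets are
  then nonempty closed subsets of \<open>\<complex>\<^sup>K\<close>, on which the weighted \<open>\<ell>\<^sup>1\<close> norm attains its
  infimum because its sublevel sets are compact.

  For the bound write \<open>x = P\<^sub>K x + r\<close>. As \<open>\<sigma>\<^sub>m\<^sub>i\<^sub>n > 0\<close>, the equation \<open>U P\<^sub>K z = U r\<close> has a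
  solution with \<open>\<sigma>\<^sub>m\<^sub>i\<^sub>n \<parallel>z\<parallel> \<le> \<parallel>U r\<parallel> \<le> \<parallel>r\<parallel>\<^sub>1\<^sub>,\<^sub>w\<close>, the last step because \<open>|\<phi>\<^sub>i| \<le> w\<^sub>i\<close> and
  the Voronoi weights \<open>\<tau>\<^sub>n\<close> sum to at most 1. Then \<open>P\<^sub>K x + z\<close> has the same data as \<open>x\<close>, so
  \<open>T\<^sub>h\<^sub>,\<^sub>K\<^sub>,\<^sub>\<eta>(x) \<le> \<parallel>r - z\<parallel>\<^sub>1\<^sub>,\<^sub>w \<le> \<parallel>r\<parallel>\<^sub>1\<^sub>,\<^sub>w + \<parallel>P\<^sub>K w\<parallel> \<parallel>z\<parallel>\<close> by Cauchy-Schwarz. For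
  nondecreasing \<open>w\<close> and \<open>i \<ge> K\<close> one has \<open>\<parallel>P\<^sub>K w\<parallel> w\<^sub>i \<le> \<surd>(i+1) w\<^sub>i\<^sup>2\<close>, which gives the
  second bound.
\<close>

section \<open>Weighted \<open>\<ell>\<^sup>1\<close> norms and the Euclidean norm\<close>

lemma in_l1w_finite_support: "\<forall>i\<ge>K. z i = 0 \<Longrightarrow> in_l1w w z"
  unfolding in_l1w_def by (rule summable_finite[of "{..<K}"]) auto

lemma norm1w_finite_support: "\<forall>i\<ge>K. z i = 0 \<Longrightarrow> norm1w w z = (\<Sum>i<K. w i * cmod (z i))"
  unfolding norm1w_def by (rule suminf_finite) auto

lemma norm1w_nonneg:
  assumes "\<And>i. 0 \<le> w i" and "in_l1w w v"
  shows "0 \<le> norm1w w v"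
  using assms unfolding norm1w_def in_l1w_def by (intro suminf_nonneg) auto

lemma
  assumes w: "\<And>i. 0 \<le> w i" and a: "in_l1w w a" and b: "in_l1w w b"
  shows in_l1w_diff: "in_l1w w (a - b)"
    and norm1w_diff_le: "norm1w w (a - b) \<le> norm1w w a + norm1w w b"
proof -
  have s: "summable (\<lambda>i. w i * cmod (a i) + w i * cmod (b i))"
    using a b unfolding in_l1w_def by (rule summable_add)
  have le: "w i * cmod ((a - b) i) \<le> w i * cmod (a i) + w i * cmod (b i)" for i
    using mult_left_mono[OF norm_triangle_ineq4[of "a i" "b i"] w[of i]]
    by (simp add: distrib_left)
  show d: "in_l1w w (a - b)" unfolding in_l1w_def
    by (rule summable_comparison_test'[OF s]) (use le w in auto)
  have "norm1w w (a - b) \<le> (\<Sum>i. w i * cmod (a i) + w i * cmod (b i))"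
    unfolding norm1w_def by (rule suminf_le[OF le d[unfolded in_l1w_def] s])
  also have "\<dots> = norm1w w a + norm1w w b"
    using a b unfolding in_l1w_def norm1w_def by (rule suminf_add[symmetric])
  finally show "norm1w w (a - b) \<le> norm1w w a + norm1w w b" .
qed

lemma norm1w_le_weight_scaled:
  assumes "in_l1w w r" and "in_l1w w' r"
    and "\<And>i. c * (w i * cmod (r i)) \<le> w' i * cmod (r i)"
  shows "c * norm1w w r \<le> norm1w w' r"
proof -
  have "c * norm1w w r = (\<Sum>i. c * (w i * cmod (r i)))"
    using assms(1) unfolding norm1w_def in_l1w_def by (rule suminf_mult[symmetric])
  also have "\<dots> \<le> norm1w w' r" unfolding norm1w_def
    using assms unfolding in_l1w_def by (intro suminf_le summable_mult) auto
  finally show ?thesis .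
qed

lemma in_l1w_weight_le:
  assumes "\<And>i. 0 \<le> w i" and "\<And>i. w i \<le> c * w' i" and "in_l1w w' x"
  shows "in_l1w w x"
  unfolding in_l1w_def
proof (rule summable_comparison_test')
  show "summable (\<lambda>i. c * (w' i * cmod (x i)))"
    using assms(3) unfolding in_l1w_def by (rule summable_mult)
  show "norm (w i * cmod (x i)) \<le> c * (w' i * cmod (x i))" for i
    using mult_right_mono[OF assms(2) norm_ge_zero[of "x i"]] assms(1)[of i] by (simp add: mult.assoc)
qed

lemma vnorm_eq_L2_set: "vnorm N v = L2_set (\<lambda>n. cmod (v n)) {..<N}"
  by (simp add: vnorm_def L2_set_def)

lemma vnorm_nonneg: "0 \<le> vnorm N v"
  by (simp add: vnorm_def sum_nonneg)

lemma vnorm_eq_0_iff: "vnorm N v = 0 \<longleftrightarrow> (\<forall>n<N. v n = 0)"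
  by (auto simp: vnorm_def sum_nonneg_eq_0_iff)

lemma norm1w_le_L2_set:
  assumes "\<And>i. 0 \<le> w i" and "\<forall>i\<ge>K. z i = 0"
  shows "norm1w w z \<le> L2_set w {..<K} * vnorm K z"
proof -
  have "norm1w w z = (\<Sum>i<K. \<bar>w i\<bar> * \<bar>cmod (z i)\<bar>)"
    using norm1w_finite_support[OF assms(2)] assms(1) by simp
  also have "\<dots> \<le> L2_set w {..<K} * vnorm K z"
    unfolding vnorm_eq_L2_set by (rule L2_set_mult_ineq)
  finally show ?thesis .
qed

lemma L2_set_initial_weights_le:
  assumes w: "mono w" "\<And>j. 0 \<le> w j" and i: "K \<le> i"
  shows "L2_set w {..<K} * w i \<le> sqrt (real (i + 1)) * (w i)\<^sup>2"
proof -
  have "(\<Sum>j<K. (w j)\<^sup>2) \<le> (\<Sum>j<K. (w i)\<^sup>2)"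
    using i w by (intro sum_mono power_mono) (auto simp: mono_def)
  also have "\<dots> \<le> real (i + 1) * (w i)\<^sup>2" using i by (simp add: mult_right_mono)
  finally have "L2_set w {..<K} \<le> sqrt (real (i + 1) * (w i)\<^sup>2)"
    unfolding L2_set_def by (rule real_sqrt_le_mono)
  hence "L2_set w {..<K} \<le> sqrt (real (i + 1)) * w i"
    using w(2)[of i] by (simp add: real_sqrt_mult)
  from mult_right_mono[OF this w(2)[of i]] show ?thesis by (simp add: power2_eq_square)
qed

lemma in_l1w_of_dominating_weight:
  assumes mono: "mono w" and w: "\<And>i. 0 < w i"
    and wt: "\<forall>i. sqrt (real (i + 1)) * (w i)\<^sup>2 \<le> wt i" and x: "in_l1w wt x"
  shows "in_l1w w x"
proof (rule in_l1w_weight_le[OF less_imp_le[OF w] _ x])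
  fix i
  have "w 0 * w i \<le> w i * w i"
    using mono w[of i] by (simp add: mono_def mult_right_mono)
  also have "\<dots> \<le> sqrt (real (i + 1)) * (w i)\<^sup>2"
    by (simp add: power2_eq_square mult_le_cancel_right1)
  also have "\<dots> \<le> wt i" using wt by blast
  finally show "w i \<le> 1 / w 0 * wt i" using w[of 0] by (simp add: field_simps)
qed

lemma L2_set_mult_norm1w_tail_le:
  assumes mono: "mono w" and w: "\<And>i. 0 \<le> w i"
    and wt: "\<forall>i. sqrt (real (i + 1)) * (w i)\<^sup>2 \<le> wt i"
    and x_w: "in_l1w w x" and x_wt: "in_l1w wt x"
  shows "L2_set w {..<K} * norm1w w (x - projK K x) \<le> norm1w wt (x - projK K x)"
proof (rule norm1w_le_weight_scaled)
  have supp: "\<forall>i\<ge>K. projK K x i = 0" by (simp add: projK_def)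
  show "in_l1w w (x - projK K x)" by (intro in_l1w_diff w x_w in_l1w_finite_support[OF supp])
  have wt_nonneg: "0 \<le> wt i" for i
  proof -
    have "0 \<le> sqrt (real (i + 1)) * (w i)\<^sup>2" by simp
    also have "\<dots> \<le> wt i" using wt by blast
    finally show ?thesis .
  qed
  show "in_l1w wt (x - projK K x)"
    by (intro in_l1w_diff wt_nonneg x_wt in_l1w_finite_support[OF supp])
  fix i
  show "L2_set w {..<K} * (w i * cmod ((x - projK K x) i)) \<le> wt i * cmod ((x - projK K x) i)"
  proof (cases "K \<le> i")
    case True
    have "L2_set w {..<K} * w i \<le> wt i"
      using L2_set_initial_weights_le[OF mono w True] wt[rule_format, of i] by linarith
    from mult_right_mono[OF this norm_ge_zero] show ?thesis by (simp add: mult.assoc)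
  qed (simp add: projK_def)
qed


section \<open>Complex-valued functions as a vector space\<close>


definition fun_scale :: "complex \<Rightarrow> ('a \<Rightarrow> complex) \<Rightarrow> 'a \<Rightarrow> complex" where
  "fun_scale c f = (\<lambda>n. c * f n)"

lemma vnorm_fun_scale: "vnorm N (fun_scale c v) = cmod c * vnorm N v"
  by (simp add: fun_scale_def vnorm_eq_L2_set norm_mult L2_set_right_distrib)

interpretation fun_space: vector_space fun_scale
  by unfold_locales (auto simp: fun_scale_def fun_eq_iff algebra_simps)

interpretation complex_space: vector_space "(*) :: complex \<Rightarrow> complex \<Rightarrow> complex"
  by unfold_locales (auto simp: algebra_simps)

interpretation fun_functional: vector_space_pair fun_scale "(*) :: complex \<Rightarrow> complex \<Rightarrow> complex" ..

interpretation fun_endo: vector_space_pair "fun_scale :: complex \<Rightarrow> ('a \<Rightarrow> complex) \<Rightarrow> _"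
  "fun_scale :: complex \<Rightarrow> ('b \<Rightarrow> complex) \<Rightarrow> _" ..

lemma subspace_range_linear:
  fixes f :: "('a \<Rightarrow> complex) \<Rightarrow> 'b \<Rightarrow> complex"
  shows "Vector_Spaces.linear fun_scale fun_scale f \<Longrightarrow> fun_space.subspace (range f)"
  by (rule fun_endo.linear_subspace_image) simp_all

definition unit_vec :: "nat \<Rightarrow> nat \<Rightarrow> complex" where
  "unit_vec n = (\<lambda>m. if m = n then 1 else 0)"

lemma fun_sum_apply: "(sum f A) x = (\<Sum>a\<in>A. f a x)"
  by (induct A rule: infinite_finite_induct) auto

lemma finite_support_eq_sum_unit_vec:
  assumes "\<forall>n\<ge>N. u n = 0"
  shows "u = (\<Sum>n<N. fun_scale (u n) (unit_vec n))"
proof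
  fix m
  have "(\<Sum>n<N. fun_scale (u n) (unit_vec n)) m = (\<Sum>n<N. if m = n then u n else 0)"
    unfolding fun_sum_apply by (rule sum.cong) (auto simp: fun_scale_def unit_vec_def)
  also have "\<dots> = u m" using assms by (auto simp: sum.delta not_less)
  finally show "u m = (\<Sum>n<N. fun_scale (u n) (unit_vec n)) m" ..
qed

lemma in_span_unit_vec:
  assumes "\<forall>n\<ge>N. u n = 0"
  shows "u \<in> fun_space.span (unit_vec ` {..<N})"
proof -
  have "(\<Sum>n<N. fun_scale (u n) (unit_vec n)) \<in> fun_space.span (unit_vec ` {..<N})"
    by (intro fun_space.span_sum fun_space.span_scale fun_space.span_base) simp
  thus ?thesis by (subst finite_support_eq_sum_unit_vec[OF assms])
qed

lemma linear_functional_finite_support: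
  assumes "Vector_Spaces.linear fun_scale (*) g" and "\<forall>n\<ge>N. u n = 0"
  shows "g u = (\<Sum>n<N. u n * g (unit_vec n))"
  by (subst finite_support_eq_sum_unit_vec[OF assms(2)])
     (simp add: fun_functional.linear_sum[OF assms(1)] fun_functional.linear_scale[OF assms(1)])

text \<open>A vector outside a span is separated from it by a linear functional, since it can be
  added to a basis of the span and a linear map may be prescribed freely on a basis.\<close>

lemma in_span_if_annihilated:
  assumes "\<And>g. Vector_Spaces.linear fun_scale (*) g \<Longrightarrow> \<forall>s\<in>S. g s = 0 \<Longrightarrow> g b = 0"
  shows "b \<in> fun_space.span S"
proof (rule ccontr)
  assume b: "b \<notin> fun_space.span S"
  obtain B where B: "B \<subseteq> S" "fun_space.independent B" "S \<subseteq> fun_space.span B"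
    using fun_space.maximal_independent_subset by blast
  have bB: "b \<notin> fun_space.span B" using b B(1) fun_space.span_mono by blast
  obtain g where g: "Vector_Spaces.linear fun_scale (*) g"
    and gb: "\<forall>s\<in>insert b B. g s = (if s = b then 1 else 0)"
    using fun_functional.linear_independent_extend[OF fun_space.independent_insertI[OF bB B(2)],
        of "\<lambda>s. if s = b then 1 else 0"]
    by blast
  have "\<forall>s\<in>B. g s = 0" using gb bB fun_space.span_base by fastforce
  hence "\<forall>s\<in>fun_space.span B. g s = 0"
    using fun_functional.linear_eq_on[OF g fun_functional.linear_zero] by auto
  hence "g b = 0" using assms[OF g] B(3) by blast
  with gb show False by simp
qed


section \<open>Quadrature weights of Voronoi cells\<close>

lemma equidistant_set_eq_hyperplane:
  fixes a b :: "'a::euclidean_space"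
  shows "{s. dist s a = dist s b} = {s. (2 *\<^sub>R (b - a)) \<bullet> s = b \<bullet> b - a \<bullet> a}"
proof -
  have "dist s a = dist s b \<longleftrightarrow> (dist s a)\<^sup>2 = (dist s b)\<^sup>2" for s
    by (simp add: power2_eq_iff_nonneg)
  moreover have "(dist s c)\<^sup>2 = s \<bullet> s - 2 * (c \<bullet> s) + c \<bullet> c" for s c :: 'a
    by (simp add: dist_norm power2_norm_eq_inner inner_diff_left inner_diff_right inner_commute)
  ultimately show ?thesis by (auto simp: inner_diff_left)
qed

lemma equidistant_set_null:
  fixes a b :: "'a::euclidean_space"
  assumes "a \<noteq> b"
  shows "{s. dist s a = dist s b} \<in> null_sets lborel"
proof -
  have "negligible {s. (2 *\<^sub>R (b - a)) \<bullet> s = b \<bullet> b - a \<bullet> a}"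
    by (rule negligible_hyperplane) (use assms in simp)
  hence "{s. dist s a = dist s b} \<in> null_sets lebesgue"
    by (simp add: equidistant_set_eq_hyperplane negligible_iff_null_sets)
  moreover have "{s. dist s a = dist s b} \<in> sets borel"
    by (intro borel_closed closed_Collect_eq continuous_intros)
  ultimately show ?thesis by (simp add: null_sets_completion_iff)
qed

lemma sets_voronoi:
  fixes D :: "'a::euclidean_space set"
  assumes "open D"
  shows "voronoi D t N n \<in> sets lborel"
proof -
  have "voronoi D t N n = D \<inter> (\<Inter>m\<in>{m. m < N \<and> m \<noteq> n}. {s. dist s (t n) \<le> dist s (t m)})"
    by (auto simp: voronoi_def)
  also have "\<dots> \<in> sets borel"
    by (intro sets.Int borel_open assms borel_closed closed_INT ballI closed_Collect_le
        continuous_intros)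
  finally show ?thesis by simp
qed

lemma qweight_nonneg:
  assumes "\<And>s. s \<in> D \<Longrightarrow> 0 \<le> \<nu> s"
  shows "0 \<le> qweight \<nu> D t N n"
  unfolding qweight_def set_lebesgue_integral_def
  by (rule integral_nonneg_AE, rule AE_I2) (auto simp: indicator_def voronoi_def assms)

lemma card_voronoi_cells_le_1:
  assumes "\<And>m n. m < N \<Longrightarrow> n < N \<Longrightarrow> m \<noteq> n \<Longrightarrow> dist s (t m) \<noteq> dist s (t n)"
  shows "card {n. n < N \<and> s \<in> voronoi D t N n} \<le> 1"
proof -
  have "m = n" if "m < N" "s \<in> voronoi D t N m" "n < N" "s \<in> voronoi D t N n" for m n
    using that assms[of m n] by (force simp: voronoi_def)
  thus ?thesis by (subst One_nat_def, subst card_le_Suc0_iff_eq) auto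
qed

text \<open>Distinct cells meet only on bisecting hyperplanes, which are null sets, so the cells
  almost cover \<open>D\<close> at most once.\<close>

lemma sum_qweight_le_1:
  fixes D :: "'a::euclidean_space set"
  assumes D: "open D" and nonneg: "\<And>s. s \<in> D \<Longrightarrow> 0 \<le> \<nu> s"
    and int: "set_integrable lborel D \<nu>" and one: "(LINT s:D|lborel. \<nu> s) = 1"
    and inj: "inj_on t {..<N}"
  shows "(\<Sum>n<N. qweight \<nu> D t N n) \<le> 1"
proof -
  let ?V = "voronoi D t N"
  have V_sub: "?V n \<subseteq> D" for n by (auto simp: voronoi_def)
  have int_V: "integrable lborel (\<lambda>s. indicator (?V n) s *\<^sub>R \<nu> s)" for n
    using set_integrable_subset[OF int sets_voronoi[OF D] V_sub] unfolding set_integrable_def .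
  have AE: "AE s in lborel. \<forall>p\<in>{..<N}\<times>{..<N}. fst p \<noteq> snd p \<longrightarrow>
      dist s (t (fst p)) \<noteq> dist s (t (snd p))"
  proof (rule AE_finite_allI)
    fix p assume "p \<in> {..<N}\<times>{..<N}"
    hence "fst p \<noteq> snd p \<longrightarrow> {s. dist s (t (fst p)) = dist s (t (snd p))} \<in> null_sets lborel"
      using inj by (auto simp: inj_on_def intro: equidistant_set_null)
    thus "AE s in lborel. fst p \<noteq> snd p \<longrightarrow> dist s (t (fst p)) \<noteq> dist s (t (snd p))"
      by (cases "fst p = snd p") (auto dest: AE_not_in)
  qed simp
  have "(\<Sum>n<N. qweight \<nu> D t N n) = (LINT s|lborel. (\<Sum>n<N. indicator (?V n) s *\<^sub>R \<nu> s))"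
    unfolding qweight_def set_lebesgue_integral_def
    by (rule Bochner_Integration.integral_sum[symmetric]) (rule int_V)
  also have "\<dots> \<le> (LINT s|lborel. indicator D s *\<^sub>R \<nu> s)"
  proof (rule integral_mono_AE)
    show "integrable lborel (\<lambda>s. indicator D s *\<^sub>R \<nu> s)"
      using int unfolding set_integrable_def .
    from AE show "AE s in lborel. (\<Sum>n<N. indicator (?V n) s *\<^sub>R \<nu> s) \<le> indicator D s *\<^sub>R \<nu> s"
    proof eventually_elim
      case (elim s)
      have "(\<Sum>n<N. indicator (?V n) s *\<^sub>R \<nu> s) = real (card {n. n < N \<and> s \<in> ?V n}) * \<nu> s"
        by (simp add: indicator_def sum.If_cases Int_def lessThan_def)
      also have "\<dots> \<le> indicator D s *\<^sub>R \<nu> s"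
      proof (cases "s \<in> D")
        case True
        thus ?thesis using card_voronoi_cells_le_1[of N s t D] elim nonneg
          by (auto intro: mult_left_le_one_le)
      qed (simp add: voronoi_def)
      finally show ?case .
    qed
  qed (intro Bochner_Integration.integrable_sum int_V)
  also have "\<dots> = 1" using one unfolding set_lebesgue_integral_def .
  finally show ?thesis .
qed


section \<open>Compactness in the space of sequences\<close>

lemma continuous_on_fun_coordinate [continuous_intros]:
  "continuous_on S (\<lambda>x::'a \<Rightarrow> 'b::topological_space. x i)"
  by (rule continuous_on_subset[OF continuous_on_product_coordinates]) simp

lemma compact_finite_support_box:
  "compact (Pi\<^sub>E UNIV (\<lambda>i. if i < K then cball (0::complex) R else {0}))"
proof -
  have "compactin (product_topology (\<lambda>i. euclidean) UNIV)
          (Pi\<^sub>E UNIV (\<lambda>i. if i < K then cball (0::complex) R else {0}))"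
    unfolding compactin_PiE by (auto simp: compactin_euclidean_iff)
  thus ?thesis by (simp add: euclidean_product_topology compactin_euclidean_iff)
qed

lemma closed_finite_support: "closed {z :: nat \<Rightarrow> 'b::{t2_space,zero}. \<forall>i\<ge>K. z i = 0}"
proof -
  have "{z :: nat \<Rightarrow> 'b. \<forall>i\<ge>K. z i = 0} = (\<Inter>i\<in>{K..}. {z. z i = 0})" by auto
  thus ?thesis
    by (auto intro!: closed_INT closed_Collect_eq[OF continuous_on_product_coordinates continuous_on_const])
qed

text \<open>The sublevel set \<open>{z \<in> S. h z \<le> h z\<^sub>0}\<close> of the weighted sum \<open>h\<close> lies in a box of
  radius \<open>h z\<^sub>0 / min\<^sub>i\<^sub><\<^sub>K w\<^sub>i\<close>, hence is compact.\<close>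

lemma weighted_sum_attains_min:
  fixes S :: "(nat \<Rightarrow> complex) set"
  assumes S: "closed S" and supp: "\<And>z. z \<in> S \<Longrightarrow> \<forall>i\<ge>K. z i = 0" and z0: "z0 \<in> S"
    and w: "\<And>i. 0 < w i"
  shows "\<exists>z\<in>S. \<forall>z'\<in>S. (\<Sum>i<K. w i * cmod (z i)) \<le> (\<Sum>i<K. w i * cmod (z' i))"
proof (cases "K = 0")
  case False
  define h where "h z = (\<Sum>i<K. w i * cmod (z i))" for z :: "nat \<Rightarrow> complex"
  define m where "m = Min (w ` {..<K})"
  have m: "0 < m" "\<And>i. i < K \<Longrightarrow> m \<le> w i"
    using False w unfolding m_def by (subst Min_gr_iff) auto
  define S' where "S' = S \<inter> {z. h z \<le> h z0}"
  define R where "R = h z0 / m"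
  have "S' \<subseteq> Pi\<^sub>E UNIV (\<lambda>i. if i < K then cball 0 R else {0})"
  proof (intro subsetI PiE_I)
    fix z i assume z: "z \<in> S'"
    show "z i \<in> (if i < K then cball 0 R else {0})"
    proof (cases "i < K")
      case True
      have "m * cmod (z i) \<le> w i * cmod (z i)" using m(2)[OF True] by (simp add: mult_right_mono)
      also have "\<dots> \<le> h z"
        unfolding h_def using True w by (intro member_le_sum) (auto simp: less_imp_le)
      also have "\<dots> \<le> h z0" using z by (simp add: S'_def)
      finally show ?thesis using True m(1) by (simp add: R_def field_simps)
    qed (use supp z in \<open>auto simp: S'_def\<close>)
  qed simp
  moreover have "closed S'"
    unfolding S'_def h_def by (intro closed_Int S closed_Collect_le continuous_intros)
  ultimately have "compact S'"
    using compact_Int_closed[OF compact_finite_support_box] by (metis inf.absorb_iff2)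
  moreover have "continuous_on S' h" unfolding h_def by (intro continuous_intros)
  moreover have "z0 \<in> S'" using z0 by (simp add: S'_def)
  ultimately obtain z where "z \<in> S'" "\<forall>z'\<in>S'. h z \<le> h z'"
    using continuous_attains_inf by blast
  hence "z \<in> S \<and> (\<forall>z'\<in>S. h z \<le> h z')" by (force simp: S'_def)
  thus ?thesis unfolding h_def by blast
qed (use z0 in auto)


section \<open>The sampling operator\<close>

locale sampling_operator =
  fixes \<phi> :: "nat \<Rightarrow> 'a \<Rightarrow> complex" and \<tau> :: "nat \<Rightarrow> real" and t :: "nat \<Rightarrow> 'a"
    and N :: nat and w :: "nat \<Rightarrow> real"
  assumes tau_nonneg: "\<And>n. 0 \<le> \<tau> n" and sum_tau_le_1: "(\<Sum>n<N. \<tau> n) \<le> 1"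
    and phi_sample_le_w: "\<And>i n. n < N \<Longrightarrow> cmod (\<phi> i (t n)) \<le> w i"
    and w_pos: "\<And>i. 0 < w i"
begin

abbreviation U where "U \<equiv> Umat \<phi> \<tau> t"

definition UPK :: "nat \<Rightarrow> (nat \<Rightarrow> complex) \<Rightarrow> nat \<Rightarrow> complex" where
  "UPK K z = (\<lambda>n. if n < N then (\<Sum>i<K. U n i * z i) else 0)"

definition UPK_adj :: "nat \<Rightarrow> (nat \<Rightarrow> complex) \<Rightarrow> nat \<Rightarrow> complex" where
  "UPK_adj K y = (\<lambda>i. if i < K then (\<Sum>n<N. cnj (U n i) * y n) else 0)"

lemma w_nonneg: "0 \<le> w i"
  using w_pos[of i] by simp

lemma Uop_eq_UPK:
  assumes "\<forall>i\<ge>K. z i = 0"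
  shows "Uop \<phi> \<tau> t N z = UPK K z"
proof -
  have "(\<Sum>i. U n i * z i) = (\<Sum>i<K. U n i * z i)" for n
    by (rule suminf_finite) (use assms in \<open>auto simp: not_less\<close>)
  thus ?thesis by (simp only: Uop_def UPK_def)
qed

lemma UPK_projK: "UPK K (projK K z) = UPK K z"
  by (auto simp: UPK_def projK_def fun_eq_iff intro!: sum.cong)

lemma RanUPK_eq_range_UPK: "RanUPK \<phi> \<tau> t N K = range (UPK K)"
proof -
  have "RanUPK \<phi> \<tau> t N K = range (\<lambda>z. UPK K (projK K z))"
    unfolding RanUPK_def by (subst Uop_eq_UPK) (auto simp: projK_def)
  thus ?thesis by (simp add: UPK_projK)
qed

lemma linear_UPK: "Vector_Spaces.linear fun_scale fun_scale (UPK K)"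
  unfolding Vector_Spaces.linear_iff
  by (intro conjI allI ext fun_space.vector_space_axioms)
     (simp_all add: UPK_def fun_scale_def sum.distrib distrib_left sum_distrib_left mult.left_commute)

lemma linear_UPK_adj: "Vector_Spaces.linear fun_scale fun_scale (UPK_adj K)"
  unfolding Vector_Spaces.linear_iff
  by (intro conjI allI ext fun_space.vector_space_axioms)
     (simp_all add: UPK_adj_def fun_scale_def sum.distrib distrib_left sum_distrib_left mult.left_commute)

lemma inner_UPK_eq_inner_UPK_adj:
  "(\<Sum>n<N. cnj (y n) * UPK K z n) = (\<Sum>i<K. cnj (UPK_adj K y i) * z i)"
proof -
  have "(\<Sum>n<N. cnj (y n) * UPK K z n) = (\<Sum>n<N. \<Sum>i<K. cnj (y n) * U n i * z i)"
    by (simp add: UPK_def sum_distrib_left mult.assoc)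
  also have "\<dots> = (\<Sum>i<K. \<Sum>n<N. cnj (y n) * U n i * z i)" by (rule sum.swap)
  also have "\<dots> = (\<Sum>i<K. cnj (UPK_adj K y i) * z i)"
    by (simp add: UPK_adj_def sum_distrib_left sum_distrib_right mult_ac)
  finally show ?thesis .
qed

lemma inner_UPK_UPK_adj:
  "(\<Sum>n<N. cnj (y n) * UPK K (UPK_adj K y) n) = of_real ((vnorm K (UPK_adj K y))\<^sup>2)"
proof -
  have "cnj z * z = of_real ((cmod z)\<^sup>2)" for z
    by (subst complex_norm_square) (rule mult.commute)
  thus ?thesis by (simp add: inner_UPK_eq_inner_UPK_adj vnorm_def sum_nonneg)
qed

lemma sigma_min_eq: "sigma_min \<phi> \<tau> t N K = Inf {vnorm K (UPK_adj K y) | y. vnorm N y = 1}"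
  by (simp add: sigma_min_def vnorm_def UPK_adj_def)

lemma sigma_min_mult_vnorm_le: "sigma_min \<phi> \<tau> t N K * vnorm N y \<le> vnorm K (UPK_adj K y)"
proof (cases "vnorm N y = 0")
  case False
  define c where "c = vnorm N y"
  have c: "0 < c" using False vnorm_nonneg[of N y] by (simp add: c_def)
  define y' where "y' = fun_scale (complex_of_real (1 / c)) y"
  have "vnorm N y' = 1"
    using c by (simp add: y'_def vnorm_fun_scale norm_divide c_def)
  moreover have "UPK_adj K y' = fun_scale (complex_of_real (1 / c)) (UPK_adj K y)"
    unfolding y'_def by (rule fun_endo.linear_scale[OF linear_UPK_adj])
  hence "vnorm K (UPK_adj K y') = vnorm K (UPK_adj K y) / c"
    using c by (simp add: vnorm_fun_scale norm_divide)
  ultimately have "sigma_min \<phi> \<tau> t N K \<le> vnorm K (UPK_adj K y) / c"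
    unfolding sigma_min_eq by (intro cInf_lower bdd_belowI[of _ 0]) (force, auto simp: vnorm_nonneg)
  thus ?thesis using c by (simp add: c_def field_simps)
qed (simp add: vnorm_nonneg)

text \<open>If a functional \<open>g\<close> kills the range of \<open>U P\<^sub>K (U P\<^sub>K)\<^sup>*\<close>, then with
  \<open>a\<^sub>n = conj (g e\<^sub>n)\<close> we get \<open>0 = g (U P\<^sub>K (U P\<^sub>K)\<^sup>* a) = \<parallel>(U P\<^sub>K)\<^sup>* a\<parallel>\<^sup>2\<close>,
  so \<open>a = 0\<close> because \<open>\<sigma>\<^sub>m\<^sub>i\<^sub>n > 0\<close>, and \<open>g\<close> vanishes on all of \<open>\<complex>\<^sup>N\<close>.\<close>

lemma range_UPK_UPK_adj:
  assumes sigma: "0 < sigma_min \<phi> \<tau> t N K" and b: "\<forall>n\<ge>N. b n = 0"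
  shows "\<exists>y. UPK K (UPK_adj K y) = b"
proof -
  let ?M = "\<lambda>y. UPK K (UPK_adj K y)"
  have "b \<in> fun_space.span (range ?M)"
  proof (rule in_span_if_annihilated)
    fix g assume g: "Vector_Spaces.linear fun_scale (*) g" and g0: "\<forall>s\<in>range ?M. g s = 0"
    define a where "a = (\<lambda>n. if n < N then cnj (g (unit_vec n)) else 0)"
    have "g (?M a) = (\<Sum>n<N. ?M a n * g (unit_vec n))"
      by (rule linear_functional_finite_support[OF g]) (simp add: UPK_def)
    also have "\<dots> = (\<Sum>n<N. cnj (a n) * ?M a n)"
      by (rule sum.cong) (auto simp: a_def mult.commute)
    also have "\<dots> = of_real ((vnorm K (UPK_adj K a))\<^sup>2)" by (rule inner_UPK_UPK_adj)
    finally have "of_real ((vnorm K (UPK_adj K a))\<^sup>2) = g (?M a)" ..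
    also have "\<dots> = 0" using g0 by blast
    finally have "vnorm K (UPK_adj K a) = 0" by simp
    hence "vnorm N a = 0"
      using sigma_min_mult_vnorm_le[of K a] sigma vnorm_nonneg[of N a]
      by (simp add: mult_le_0_iff)
    hence "\<forall>n<N. g (unit_vec n) = 0" by (simp add: vnorm_eq_0_iff a_def)
    thus "g b = 0" by (simp add: linear_functional_finite_support[OF g b])
  qed
  moreover have "fun_space.subspace (range ?M)"
    using subspace_range_linear[OF Vector_Spaces.linear_compose[OF linear_UPK_adj linear_UPK]]
    by (simp add: comp_def)
  ultimately have "b \<in> range ?M" using fun_space.span_eq_iff by blast
  thus ?thesis by blast
qed

text \<open>The solution \<open>z = (U P\<^sub>K)\<^sup>* y\<close> of minimal \<open>\<ell>\<^sup>2\<close> norm satisfies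
  \<open>\<parallel>z\<parallel>\<^sup>2 = \<langle>y, b\<rangle> \<le> \<parallel>y\<parallel> \<parallel>b\<parallel> \<le> \<parallel>z\<parallel> \<parallel>b\<parallel> / \<sigma>\<^sub>m\<^sub>i\<^sub>n\<close>.\<close>

lemma UPK_solution_bound:
  assumes sigma: "0 < sigma_min \<phi> \<tau> t N K" and b: "\<forall>n\<ge>N. b n = 0"
  shows "\<exists>z. (\<forall>i\<ge>K. z i = 0) \<and> UPK K z = b \<and> sigma_min \<phi> \<tau> t N K * vnorm K z \<le> vnorm N b"
proof -
  let ?s = "sigma_min \<phi> \<tau> t N K"
  obtain y where y: "UPK K (UPK_adj K y) = b" using range_UPK_UPK_adj[OF assms] by blast
  define z where "z = UPK_adj K y"
  have "of_real ((vnorm K z)\<^sup>2) = (\<Sum>n<N. cnj (y n) * b n)"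
    using inner_UPK_UPK_adj[of y K] y by (simp add: z_def)
  hence "(vnorm K z)\<^sup>2 \<le> cmod (\<Sum>n<N. cnj (y n) * b n)"
    by (metis Re_complex_of_real complex_Re_le_cmod)
  also have "\<dots> \<le> (\<Sum>n<N. cmod (y n) * cmod (b n))"
    by (rule order_trans[OF norm_sum]) (simp add: norm_mult)
  also have "\<dots> \<le> vnorm N y * vnorm N b"
    using L2_set_mult_ineq[of "\<lambda>n. cmod (y n)" "\<lambda>n. cmod (b n)" "{..<N}"]
    by (simp add: vnorm_eq_L2_set)
  finally have "?s * (vnorm K z)\<^sup>2 \<le> (?s * vnorm N y) * vnorm N b"
    using sigma by (simp add: mult_left_mono mult.assoc)
  also have "\<dots> \<le> vnorm K z * vnorm N b"
    using sigma_min_mult_vnorm_le[of K y] vnorm_nonneg[of N b]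
    by (simp add: z_def mult_right_mono)
  finally have "?s * vnorm K z \<le> vnorm N b"
    using vnorm_nonneg[of K z] vnorm_nonneg[of N b] sigma
    by (cases "vnorm K z = 0") (auto simp: power2_eq_square mult_ac)
  moreover have "\<forall>i\<ge>K. z i = 0" by (simp add: z_def UPK_adj_def)
  ultimately show ?thesis using y z_def by blast
qed

lemma norm_Umat_le: "n < N \<Longrightarrow> cmod (U n i) \<le> sqrt (\<tau> n) * w i"
  unfolding Umat_def using phi_sample_le_w[of n i] tau_nonneg[of n]
  by (simp add: norm_mult mult_left_mono)

lemma
  assumes v: "in_l1w w v" and n: "n < N"
  shows summable_norm_Umat_mult: "summable (\<lambda>i. norm (U n i * v i))"
    and norm_suminf_Umat_mult_le: "cmod (\<Sum>i. U n i * v i) \<le> sqrt (\<tau> n) * norm1w w v"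
proof -
  have le: "norm (U n i * v i) \<le> sqrt (\<tau> n) * (w i * cmod (v i))" for i
    using mult_right_mono[OF norm_Umat_le[OF n, of i] norm_ge_zero[of "v i"]]
    by (simp add: norm_mult mult.assoc)
  have s: "summable (\<lambda>i. sqrt (\<tau> n) * (w i * cmod (v i)))"
    using v unfolding in_l1w_def by (rule summable_mult)
  show s1: "summable (\<lambda>i. norm (U n i * v i))"
    by (rule summable_comparison_test'[OF s]) (use le in auto)
  have "cmod (\<Sum>i. U n i * v i) \<le> (\<Sum>i. sqrt (\<tau> n) * (w i * cmod (v i)))"
    by (rule order_trans[OF summable_norm[OF s1] suminf_le[OF le s1 s]])
  also have "\<dots> = sqrt (\<tau> n) * norm1w w v"
    using v unfolding in_l1w_def norm1w_def by (rule suminf_mult)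
  finally show "cmod (\<Sum>i. U n i * v i) \<le> sqrt (\<tau> n) * norm1w w v" .
qed

text \<open>This is where \<open>\<Sum>\<^sub>n \<tau>\<^sub>n \<le> 1\<close> enters.\<close>

lemma vnorm_le_if_le_sqrt_tau:
  assumes M: "0 \<le> M" and u: "\<And>n. n < N \<Longrightarrow> cmod (u n) \<le> sqrt (\<tau> n) * M"
  shows "vnorm N u \<le> M"
proof -
  have "(\<Sum>n<N. (cmod (u n))\<^sup>2) \<le> (\<Sum>n<N. (sqrt (\<tau> n) * M)\<^sup>2)"
    by (intro sum_mono power_mono) (use u in auto)
  also have "\<dots> = (\<Sum>n<N. \<tau> n) * M\<^sup>2"
    by (simp add: power_mult_distrib tau_nonneg sum_distrib_right)
  also have "\<dots> \<le> M\<^sup>2" using mult_right_mono[OF sum_tau_le_1, of "M\<^sup>2"] by simp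
  finally show ?thesis unfolding vnorm_def by (rule real_le_lsqrt[OF M])
qed

lemma vnorm_Uop_le_norm1w: "in_l1w w v \<Longrightarrow> vnorm N (Uop \<phi> \<tau> t N v) \<le> norm1w w v"
  by (rule vnorm_le_if_le_sqrt_tau)
     (auto simp: Uop_def norm1w_nonneg w_nonneg norm_suminf_Umat_mult_le)

lemma Uop_add:
  assumes "in_l1w w a" "in_l1w w b"
  shows "Uop \<phi> \<tau> t N (a + b) = Uop \<phi> \<tau> t N a + Uop \<phi> \<tau> t N b"
proof
  fix n
  show "Uop \<phi> \<tau> t N (a + b) n = (Uop \<phi> \<tau> t N a + Uop \<phi> \<tau> t N b) n"
  proof (cases "n < N")
    case True
    have "summable (\<lambda>i. U n i * a i)" "summable (\<lambda>i. U n i * b i)"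
      using summable_norm_Umat_mult[OF assms(1) True] summable_norm_Umat_mult[OF assms(2) True]
      by (auto intro: summable_norm_cancel)
    thus ?thesis using True by (simp add: Uop_def distrib_left suminf_add)
  qed (simp add: Uop_def)
qed

lemma vnorm_Uop_sample_error_le:
  assumes x: "in_l1w w x" and f: "\<And>s. f s = (\<Sum>i. x i * \<phi> i s)"
    and e: "\<And>n. n < N \<Longrightarrow> cmod (e n) \<le> \<eta>" and N: "0 < N"
    and y: "y = (\<lambda>n. if n < N then complex_of_real (sqrt (\<tau> n)) * (f (t n) + e n) else 0)"
  shows "vnorm N (\<lambda>n. Uop \<phi> \<tau> t N x n - y n) \<le> \<eta>"
proof (rule vnorm_le_if_le_sqrt_tau)
  show "0 \<le> \<eta>" using e[OF N] norm_ge_zero[of "e 0"] by linarith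
  fix n assume n: "n < N"
  have "norm (x i * \<phi> i (t n)) \<le> w i * cmod (x i)" for i
    using mult_left_mono[OF phi_sample_le_w[OF n, of i] norm_ge_zero[of "x i"]]
    by (simp add: norm_mult mult.commute)
  hence "summable (\<lambda>i. x i * \<phi> i (t n))"
    using x unfolding in_l1w_def by (blast intro: summable_norm_cancel summable_comparison_test')
  hence "(\<Sum>i. sqrt (\<tau> n) * (x i * \<phi> i (t n))) = sqrt (\<tau> n) * (\<Sum>i. x i * \<phi> i (t n))"
    by (rule suminf_mult)
  hence "Uop \<phi> \<tau> t N x n = sqrt (\<tau> n) * (\<Sum>i. x i * \<phi> i (t n))"
    using n by (simp add: Uop_def Umat_def mult_ac)
  hence "cmod (Uop \<phi> \<tau> t N x n - y n) = sqrt (\<tau> n) * cmod (e n)"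
    using n tau_nonneg[of n] by (simp add: y f algebra_simps norm_mult)
  also have "\<dots> \<le> sqrt (\<tau> n) * \<eta>" by (rule mult_left_mono[OF e[OF n]]) (simp add: tau_nonneg)
  finally show "cmod (Uop \<phi> \<tau> t N x n - y n) \<le> sqrt (\<tau> n) * \<eta>" .
qed

definition column :: "nat \<Rightarrow> nat \<Rightarrow> complex" where
  "column i = (\<lambda>n. if n < N then U n i else 0)"

lemma column_in_range_UPK: "i < K \<Longrightarrow> column i \<in> range (UPK K)"
  by (rule image_eqI[of _ _ "unit_vec i"])
     (auto simp: UPK_def column_def unit_vec_def fun_eq_iff if_distrib sum.delta cong: if_cong)

text \<open>A functional \<open>g\<close> killing every column kills \<open>U v\<close>: exchanging the finite sum over
  samples with the absolutely convergent series over \<open>i\<close> gives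
  \<open>g (U v) = \<Sum>\<^sub>i v\<^sub>i g (column i)\<close>.\<close>

lemma Uop_in_span_columns:
  assumes v: "in_l1w w v"
  shows "Uop \<phi> \<tau> t N v \<in> fun_space.span (range column)"
proof (rule in_span_if_annihilated)
  fix g assume g: "Vector_Spaces.linear fun_scale (*) g" and g0: "\<forall>s\<in>range column. g s = 0"
  have g_column: "(\<Sum>n<N. U n i * g (unit_vec n)) = 0" for i
  proof -
    have "g (column i) = (\<Sum>n<N. U n i * g (unit_vec n))"
      by (subst linear_functional_finite_support[OF g, of N]) (auto simp: column_def)
    thus ?thesis using g0 by simp
  qed
  have summable: "summable (\<lambda>i. U n i * v i)" if "n < N" for n
    using summable_norm_Umat_mult[OF v that] by (rule summable_norm_cancel)
  have "g (Uop \<phi> \<tau> t N v) = (\<Sum>n<N. Uop \<phi> \<tau> t N v n * g (unit_vec n))"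
    by (rule linear_functional_finite_support[OF g]) (simp add: Uop_def)
  also have "\<dots> = (\<Sum>n<N. \<Sum>i. U n i * v i * g (unit_vec n))"
    by (rule sum.cong) (simp_all add: Uop_def suminf_mult2 summable)
  also have "\<dots> = (\<Sum>i. \<Sum>n<N. U n i * v i * g (unit_vec n))"
    by (rule suminf_sum[symmetric]) (simp add: summable summable_mult2)
  also have "\<dots> = (\<Sum>i. v i * (\<Sum>n<N. U n i * g (unit_vec n)))"
    by (simp add: sum_distrib_left mult_ac)
  also have "\<dots> = 0" by (simp add: g_column)
  finally show "g (Uop \<phi> \<tau> t N v) = 0" .
qed

text \<open>The columns lie in the finite-dimensional space \<open>\<complex>\<^sup>N\<close>, so a basis of their span
  is made of finitely many of them.\<close>

lemma columns_in_span_of_initial_columns: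
  "\<exists>K0. range column \<subseteq> fun_space.span (column ` {..<K0})"
proof -
  obtain B where B: "B \<subseteq> range column" "fun_space.independent B"
    "range column \<subseteq> fun_space.span B"
    using fun_space.maximal_independent_subset by blast
  have "B \<subseteq> fun_space.span (unit_vec ` {..<N})"
    using B(1) by (auto simp: column_def intro!: in_span_unit_vec)
  hence "finite B" using fun_space.independent_span_bound[OF _ B(2)] by blast
  then obtain I where "finite I" "B = column ` I"
    using finite_subset_image[OF _ B(1)] by blast
  moreover obtain K0 where "I \<subseteq> {..<K0}"
    using \<open>finite I\<close> finite_nat_iff_bounded by blast
  ultimately have "fun_space.span B \<subseteq> fun_space.span (column ` {..<K0})"
    by (intro fun_space.span_mono) auto
  thus ?thesis using B(3) by blast
qed

lemma RanU_eq_RanUPK: "\<exists>K0. \<forall>K\<ge>K0. RanU \<phi> \<tau> t N w = RanUPK \<phi> \<tau> t N K"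
proof -
  obtain K0 where K0: "range column \<subseteq> fun_space.span (column ` {..<K0})"
    using columns_in_span_of_initial_columns by blast
  have "RanU \<phi> \<tau> t N w = RanUPK \<phi> \<tau> t N K" if "K0 \<le> K" for K
  proof
    have "column ` {..<K0} \<subseteq> range (UPK K)"
      using that by (auto intro: column_in_range_UPK)
    hence "fun_space.span (column ` {..<K0}) \<subseteq> range (UPK K)"
      by (rule fun_space.span_minimal[OF _ subspace_range_linear[OF linear_UPK]])
    hence "fun_space.span (range column) \<subseteq> range (UPK K)"
      using fun_space.span_minimal[OF K0 fun_space.subspace_span] by blast
    thus "RanU \<phi> \<tau> t N w \<subseteq> RanUPK \<phi> \<tau> t N K"
      using Uop_in_span_columns by (auto simp: RanU_def RanUPK_eq_range_UPK)
    show "RanUPK \<phi> \<tau> t N K \<subseteq> RanU \<phi> \<tau> t N w"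
      unfolding RanUPK_def RanU_def
      by (auto intro!: imageI in_l1w_finite_support[of K] simp: projK_def)
  qed
  thus ?thesis by blast
qed

lemma finite_support_preimage:
  assumes "RanU \<phi> \<tau> t N w = RanUPK \<phi> \<tau> t N K" and "in_l1w w v"
  shows "\<exists>z. (\<forall>i\<ge>K. z i = 0) \<and> Uop \<phi> \<tau> t N z = Uop \<phi> \<tau> t N v"
proof -
  have "Uop \<phi> \<tau> t N v \<in> RanUPK \<phi> \<tau> t N K" using assms by (auto simp: RanU_def)
  then obtain a where "Uop \<phi> \<tau> t N v = Uop \<phi> \<tau> t N (projK K a)" by (auto simp: RanUPK_def)
  thus ?thesis by (metis projK_def not_le)
qed

lemma closed_vimage_UPK: "closed C \<Longrightarrow> closed (UPK K -` C)"
proof (rule continuous_closed_vimage)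
  have "continuous_on UNIV (\<lambda>z. UPK K z n)" for n
    by (cases "n < N") (auto simp: UPK_def intro!: continuous_intros)
  hence "continuous_on UNIV (UPK K)" by (rule continuous_on_coordinatewise_then_product)
  thus "continuous (at z) (UPK K)" for z by (simp add: continuous_on_eq_continuous_at)
qed

lemma norm1w_minimiser_exists:
  assumes "RanU \<phi> \<tau> t N w = RanUPK \<phi> \<tau> t N K" and "closed {u. P u}"
    and "in_l1w w v" and "P (Uop \<phi> \<tau> t N v)"
  shows "\<exists>z. (\<forall>i\<ge>K. z i = 0) \<and> P (Uop \<phi> \<tau> t N z) \<and>
    (\<forall>z'. (\<forall>i\<ge>K. z' i = 0) \<and> P (Uop \<phi> \<tau> t N z') \<longrightarrow> norm1w w z \<le> norm1w w z')"
proof -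
  define S where "S = {z. \<forall>i\<ge>K. z i = 0} \<inter> UPK K -` {u. P u}"
  have "closed S"
    unfolding S_def by (intro closed_Int closed_finite_support closed_vimage_UPK assms(2))
  obtain z0 where "\<forall>i\<ge>K. z0 i = 0" "Uop \<phi> \<tau> t N z0 = Uop \<phi> \<tau> t N v"
    using finite_support_preimage[OF assms(1,3)] by blast
  hence "z0 \<in> S" using assms(4) by (simp add: S_def Uop_eq_UPK)
  have "\<exists>z\<in>S. \<forall>z'\<in>S. (\<Sum>i<K. w i * cmod (z i)) \<le> (\<Sum>i<K. w i * cmod (z' i))"
    by (rule weighted_sum_attains_min[OF \<open>closed S\<close> _ \<open>z0 \<in> S\<close> w_pos]) (simp add: S_def)
  then obtain z where "z \<in> S" "\<forall>z'\<in>S. (\<Sum>i<K. w i * cmod (z i)) \<le> (\<Sum>i<K. w i * cmod (z' i))"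
    by blast
  thus ?thesis by (auto simp: S_def Uop_eq_UPK norm1w_finite_support)
qed

lemma eventually_RanU_eq_and_minimisers_exist:
  assumes P: "closed {u. P u}" and Q: "closed {u. Q u}"
  shows "\<exists>K0. \<forall>K\<ge>K0.
        RanU \<phi> \<tau> t N w = RanUPK \<phi> \<tau> t N K
      \<and> ((\<exists>v. in_l1w w v \<and> P (Uop \<phi> \<tau> t N v)) \<longrightarrow>
           (\<exists>z. (\<forall>i\<ge>K. z i = 0) \<and> P (Uop \<phi> \<tau> t N z) \<and>
              (\<forall>z'. (\<forall>i\<ge>K. z' i = 0) \<and> P (Uop \<phi> \<tau> t N z') \<longrightarrow> norm1w w z \<le> norm1w w z')))
      \<and> ((\<exists>v. in_l1w w v \<and> Q (Uop \<phi> \<tau> t N v)) \<longrightarrow>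
           (\<exists>z. (\<forall>i\<ge>K. z i = 0) \<and> Q (Uop \<phi> \<tau> t N z) \<and>
              (\<forall>z'. (\<forall>i\<ge>K. z' i = 0) \<and> Q (Uop \<phi> \<tau> t N z') \<longrightarrow> norm1w w z \<le> norm1w w z')))"
proof -
  obtain K0 where K0: "\<forall>K\<ge>K0. RanU \<phi> \<tau> t N w = RanUPK \<phi> \<tau> t N K"
    using RanU_eq_RanUPK by blast
  show ?thesis
  proof (intro exI[of _ K0] allI impI conjI)
    fix K assume "K0 \<le> K"
    with K0 have R: "RanU \<phi> \<tau> t N w = RanUPK \<phi> \<tau> t N K" by blast
    thus "RanU \<phi> \<tau> t N w = RanUPK \<phi> \<tau> t N K" .
    show "\<exists>z. (\<forall>i\<ge>K. z i = 0) \<and> P (Uop \<phi> \<tau> t N z) \<and>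
        (\<forall>z'. (\<forall>i\<ge>K. z' i = 0) \<and> P (Uop \<phi> \<tau> t N z') \<longrightarrow> norm1w w z \<le> norm1w w z')"
      if "\<exists>v. in_l1w w v \<and> P (Uop \<phi> \<tau> t N v)"
      using that norm1w_minimiser_exists[OF R P] by blast
    show "\<exists>z. (\<forall>i\<ge>K. z i = 0) \<and> Q (Uop \<phi> \<tau> t N z) \<and>
        (\<forall>z'. (\<forall>i\<ge>K. z' i = 0) \<and> Q (Uop \<phi> \<tau> t N z') \<longrightarrow> norm1w w z \<le> norm1w w z')"
      if "\<exists>v. in_l1w w v \<and> Q (Uop \<phi> \<tau> t N v)"
      using that norm1w_minimiser_exists[OF R Q] by blast
  qed
qed

lemma Thk_le_norm1w:
  assumes x: "in_l1w w x" and xb: "\<forall>i\<ge>K. xb i = 0"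
    and feasible: "vnorm N (\<lambda>n. Uop \<phi> \<tau> t N xb n - y n) \<le> \<eta>"
  shows "Thk \<phi> \<tau> t N w y K \<eta> x \<le> norm1w w (x - xb)"
  unfolding Thk_def
proof (rule cInf_lower)
  show "norm1w w (x - xb) \<in> {norm1w w (x - xb) |xb. (\<forall>i\<ge>K. xb i = 0) \<and>
      vnorm N (\<lambda>n. Uop \<phi> \<tau> t N xb n - y n) \<le> \<eta>}"
    using xb feasible by blast
  show "bdd_below {norm1w w (x - xb) |xb. (\<forall>i\<ge>K. xb i = 0) \<and>
      vnorm N (\<lambda>n. Uop \<phi> \<tau> t N xb n - y n) \<le> \<eta>}"
  proof (rule bdd_belowI[of _ 0])
    fix v assume "v \<in> {norm1w w (x - xb) |xb. (\<forall>i\<ge>K. xb i = 0) \<and>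
      vnorm N (\<lambda>n. Uop \<phi> \<tau> t N xb n - y n) \<le> \<eta>}"
    then obtain xb' where "v = norm1w w (x - xb')" "\<forall>i\<ge>K. xb' i = 0" by blast
    thus "0 \<le> v"
      using norm1w_nonneg[OF w_nonneg in_l1w_diff[OF w_nonneg x in_l1w_finite_support]] by simp
  qed
qed

lemma Thk_le_tail_plus_correction:
  assumes sigma: "0 < sigma_min \<phi> \<tau> t N K" and x: "in_l1w w x"
    and feasible: "vnorm N (\<lambda>n. Uop \<phi> \<tau> t N x n - y n) \<le> \<eta>"
  defines "r \<equiv> x - projK K x"
  shows "Thk \<phi> \<tau> t N w y K \<eta> x
    \<le> norm1w w r + L2_set w {..<K} * (vnorm N (Uop \<phi> \<tau> t N r) / sigma_min \<phi> \<tau> t N K)"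
proof -
  let ?s = "sigma_min \<phi> \<tau> t N K"
  have p: "\<forall>i\<ge>K. projK K x i = 0" by (simp add: projK_def)
  have r: "in_l1w w r" unfolding r_def by (intro in_l1w_diff w_nonneg x in_l1w_finite_support[OF p])
  obtain z where z: "\<forall>i\<ge>K. z i = 0" "UPK K z = Uop \<phi> \<tau> t N r"
    and z_bound: "?s * vnorm K z \<le> vnorm N (Uop \<phi> \<tau> t N r)"
    using UPK_solution_bound[OF sigma, of "Uop \<phi> \<tau> t N r"] by (auto simp: Uop_def)
  define xb where "xb = projK K x + z"
  have xb: "\<forall>i\<ge>K. xb i = 0" using z(1) by (simp add: xb_def projK_def)
  have "Uop \<phi> \<tau> t N xb = UPK K xb" by (rule Uop_eq_UPK[OF xb])
  also have "\<dots> = UPK K (projK K x) + UPK K z"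
    unfolding xb_def by (rule fun_endo.linear_add[OF linear_UPK])
  also have "\<dots> = Uop \<phi> \<tau> t N (projK K x) + Uop \<phi> \<tau> t N r"
    by (simp only: Uop_eq_UPK[OF p] z(2))
  also have "\<dots> = Uop \<phi> \<tau> t N x"
    using Uop_add[OF in_l1w_finite_support[OF p] r] by (simp add: r_def)
  finally have "Thk \<phi> \<tau> t N w y K \<eta> x \<le> norm1w w (x - xb)"
    using Thk_le_norm1w[OF x xb] feasible by simp
  also have "norm1w w (x - xb) = norm1w w (r - z)" by (simp add: xb_def r_def diff_diff_eq)
  also have "\<dots> \<le> norm1w w r + norm1w w z"
    by (intro norm1w_diff_le w_nonneg r in_l1w_finite_support[OF z(1)])
  also have "norm1w w z \<le> L2_set w {..<K} * vnorm K z"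
    by (intro norm1w_le_L2_set w_nonneg z(1))
  also have "\<dots> \<le> L2_set w {..<K} * (vnorm N (Uop \<phi> \<tau> t N r) / ?s)"
    using z_bound sigma by (intro mult_left_mono L2_set_nonneg) (simp_all add: field_simps)
  finally show ?thesis by simp
qed

lemma Thk_le_tail_bound:
  assumes sigma: "0 < sigma_min \<phi> \<tau> t N K" and x: "in_l1w w x"
    and feasible: "vnorm N (\<lambda>n. Uop \<phi> \<tau> t N x n - y n) \<le> \<eta>"
  shows "Thk \<phi> \<tau> t N w y K \<eta> x \<le> norm1w w (x - projK K x)
     + sqrt (\<Sum>i<K. (w i)\<^sup>2) / sigma_min \<phi> \<tau> t N K * norm1w w (x - projK K x)"
proof -
  let ?r = "x - projK K x"
  have "in_l1w w ?r"
    by (intro in_l1w_diff w_nonneg x in_l1w_finite_support[of K]) (simp add: projK_def)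
  hence "vnorm N (Uop \<phi> \<tau> t N ?r) / sigma_min \<phi> \<tau> t N K \<le> norm1w w ?r / sigma_min \<phi> \<tau> t N K"
    using sigma by (intro divide_right_mono vnorm_Uop_le_norm1w) simp_all
  from mult_left_mono[OF this L2_set_nonneg[of w "{..<K}"]]
  show ?thesis
    using Thk_le_tail_plus_correction[OF sigma x feasible] by (simp add: L2_set_def)
qed

lemma Thk_le_weighted_tail_bound:
  assumes sigma: "0 < sigma_min \<phi> \<tau> t N K" and mono: "mono w"
    and wt: "\<forall>i. sqrt (real (i + 1)) * (w i)\<^sup>2 \<le> wt i" and x: "in_l1w wt x"
    and feasible: "vnorm N (\<lambda>n. Uop \<phi> \<tau> t N x n - y n) \<le> \<eta>"
  shows "Thk \<phi> \<tau> t N w y K \<eta> x \<le> norm1w w (x - projK K x)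
     + 1 / sigma_min \<phi> \<tau> t N K * norm1w wt (x - projK K x)"
proof -
  let ?s = "sigma_min \<phi> \<tau> t N K"
  let ?r = "x - projK K x"
  let ?C = "L2_set w {..<K}"
  have x_w: "in_l1w w x" by (rule in_l1w_of_dominating_weight[OF mono w_pos wt x])
  have r: "in_l1w w ?r"
    by (intro in_l1w_diff w_nonneg x_w in_l1w_finite_support[of K]) (simp add: projK_def)
  have "?C * (vnorm N (Uop \<phi> \<tau> t N ?r) / ?s) \<le> ?C * norm1w w ?r / ?s"
    using sigma vnorm_Uop_le_norm1w[OF r]
    by (simp add: mult_left_mono divide_right_mono L2_set_nonneg)
  also have "\<dots> \<le> 1 / ?s * norm1w wt ?r"
    using L2_set_mult_norm1w_tail_le[OF mono w_nonneg wt x_w x] sigma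
    by (simp add: divide_right_mono)
  finally show ?thesis
    using Thk_le_tail_plus_correction[OF sigma x_w feasible] by linarith
qed

end

theorem theorem6p1:
  fixes D :: "'a::euclidean_space set"
    and \<nu> :: "'a \<Rightarrow> real"
    and \<phi> :: "nat \<Rightarrow> 'a \<Rightarrow> complex"
    and t :: "nat \<Rightarrow> 'a" and N :: nat
    and \<tau> :: "nat \<Rightarrow> real"
    and w :: "nat \<Rightarrow> real"
    and x :: "nat \<Rightarrow> complex" and e :: "nat \<Rightarrow> complex" and \<eta> :: real
    and f :: "'a \<Rightarrow> complex" and y :: "nat \<Rightarrow> complex"
  assumes D_open: "open D" and D_conn: "connected D" and D_ne: "D \<noteq> {}"
    and nu_nonneg: "\<And>s. s \<in> D \<Longrightarrow> 0 \<le> \<nu> s"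
    and nu_int: "set_integrable lborel D \<nu>"
    and nu_one: "(LINT s:D|lborel. \<nu> s) = 1"
    and phi_meas: "\<And>i. set_borel_measurable lborel D (\<phi> i)"
    and phi_L2: "\<And>i. set_integrable lborel D (\<lambda>s. \<nu> s * (cmod (\<phi> i s))\<^sup>2)"
    and phi_orth: "\<And>i j. (LINT s:D|lborel. complex_of_real (\<nu> s) * \<phi> i s * cnj (\<phi> j s))
                        = (if i = j then 1 else 0)"
    and N_pos: "0 < N"
    and t_in: "\<And>n. n < N \<Longrightarrow> t n \<in> closure D"
    and t_inj: "inj_on t {..<N}"
    and tau_def: "\<And>n. \<tau> n = qweight \<nu> D t N n"
    and w_pos: "\<And>i. 0 < w i"
    and w_bound: "\<And>i s. s \<in> closure D \<Longrightarrow> cmod (\<phi> i s) \<le> w i"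
    and f_def: "\<And>s. f s = (\<Sum>i. x i * \<phi> i s)"
    and e_bound: "\<And>n. n < N \<Longrightarrow> cmod (e n) \<le> \<eta>"
    and y_def: "y = (\<lambda>n. if n < N then complex_of_real (sqrt (\<tau> n)) * (f (t n) + e n) else 0)"
  shows
    "(\<exists>K0. \<forall>K\<ge>K0.
        RanU \<phi> \<tau> t N w = RanUPK \<phi> \<tau> t N K
      \<and> ((\<exists>v. in_l1w w v \<and> Uop \<phi> \<tau> t N v = y) \<longrightarrow>
           (\<exists>z. (\<forall>i\<ge>K. z i = 0) \<and> Uop \<phi> \<tau> t N z = y \<and>
              (\<forall>z'. (\<forall>i\<ge>K. z' i = 0) \<and> Uop \<phi> \<tau> t N z' = y \<longrightarrow> norm1w w z \<le> norm1w w z')))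
      \<and> ((\<exists>v. in_l1w w v \<and> vnorm N (\<lambda>n. Uop \<phi> \<tau> t N v n - y n) \<le> \<eta>) \<longrightarrow>
           (\<exists>z. (\<forall>i\<ge>K. z i = 0) \<and> vnorm N (\<lambda>n. Uop \<phi> \<tau> t N z n - y n) \<le> \<eta> \<and>
              (\<forall>z'. (\<forall>i\<ge>K. z' i = 0) \<and> vnorm N (\<lambda>n. Uop \<phi> \<tau> t N z' n - y n) \<le> \<eta>
                 \<longrightarrow> norm1w w z \<le> norm1w w z'))))
   \<and> (\<forall>K. RanUPK \<phi> \<tau> t N K = RanU \<phi> \<tau> t N w \<longrightarrow> 0 < sigma_min \<phi> \<tau> t N K \<longrightarrow>
        (in_l1w w x \<longrightarrow>
           Thk \<phi> \<tau> t N w y K \<eta> x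
             \<le> norm1w w (x - projK K x)
               + sqrt (\<Sum>i<K. (w i)\<^sup>2) / sigma_min \<phi> \<tau> t N K * norm1w w (x - projK K x))
      \<and> (\<forall>wt :: nat \<Rightarrow> real. mono w \<and> (\<forall>i. sqrt (real (i + 1)) * (w i)\<^sup>2 \<le> wt i) \<and> in_l1w wt x \<longrightarrow>
           Thk \<phi> \<tau> t N w y K \<eta> x
             \<le> norm1w w (x - projK K x)
               + 1 / sigma_min \<phi> \<tau> t N K * norm1w wt (x - projK K x)))"
proof -
  interpret sampling_operator \<phi> \<tau> t N w
  proof
    show "0 \<le> \<tau> n" for n using qweight_nonneg[of D \<nu>] nu_nonneg tau_def by simp
    show "(\<Sum>n<N. \<tau> n) \<le> 1"
      using sum_qweight_le_1[OF D_open nu_nonneg nu_int nu_one t_inj] tau_def by simp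
    show "cmod (\<phi> i (t n)) \<le> w i" if "n < N" for i n using w_bound t_in that by blast
  qed (rule w_pos)
  have feasible: "vnorm N (\<lambda>n. Uop \<phi> \<tau> t N x n - y n) \<le> \<eta>" if "in_l1w w x"
    by (rule vnorm_Uop_sample_error_le[OF that f_def e_bound N_pos y_def])
  have closed_data: "closed {u. u = y}" by simp
  have closed_tube: "closed {u. vnorm N (\<lambda>n. u n - y n) \<le> \<eta>}"
    unfolding vnorm_def by (intro closed_Collect_le continuous_intros)
  show ?thesis
  proof (intro conjI allI impI)
  qed (fact eventually_RanU_eq_and_minimisers_exist[OF closed_data closed_tube]
      | use Thk_le_tail_bound[OF _ _ feasible]
        Thk_le_weighted_tail_bound[OF _ _ _ _ feasible[OF in_l1w_of_dominating_weight[OF _ w_pos]]]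
        in blast)+
qed

end
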